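(* Let $(\widetilde{\mathbf{X}},Y)$ with $\widetilde{\mathbf{X}}\in\mathbb{R}^d$ satisfy $Y=\mu(\widetilde{\mathbf{X}})+\varepsilon$, where $\mu(\widetilde{\mathbf{X}})=\mathbb{E}[Y\mid\widetilde{\mathbf{X}}]$ and $\|\mu\|_\infty\le\mu_{max}<\infty$. Assume that conditionally on $\widetilde{\mathbf{X}}=\widetilde{\mathbf{x}}$, $\varepsilon$ is sub-Gaussian with Orlicz norm in $(0,s_{max}]$ and conditional variance at most $\sigma^2_{max}$, uniformly in $\widetilde{\mathbf{x}}$. Let $(\widetilde{\mathbf{x}}_\ell,y_\ell)_{\ell\le N}$ be i.i.d. copies. Assume there are constants $C_d>C_u>0$ and events $\mathcal{B}_N$ on $\widetilde{\mathbf{X}}^N=(\widetilde{\mathbf{x}}_1,\dots,\widetilde{\mathbf{x}}_N)$ with $\mathbb{P}(\mathcal{B}_N)\to1$, such that on $\mathcal{B}_N$, with $K_0=\lfloor\ln(N)/(2C_d+1)\rfloor$, the Gram eigenvalues satisfy $\sum_{k=K_0}^N\widehat\mu_k\le\sum_{k=K_0}^Ne^{-C_uk}$ and $\widehat\mu_{K_0}\ge e^{-C_dK_0}$. Let $\widehat f^{(m_{stop})}$ be the $L^2$-boosting estimate with $m_{stop}=N^{\frac14\frac{C_u+C_d+1/2}{C_d+1}}$. Then there exist $\delta>0$ and a function $h(N)\in o(N^{1/4-\delta})$ such that $$\mathbb{P}\Big(\big\{\|\widehat f^{(m_{stop})}\|_H>h(N)\big\}\cap\{\widetilde{\mathbf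{X}}^N\in\mathcal{B}_N\}\Big)\to0\qquad(N\to\infty).$$
   Context: $H=H_1\oplus\cdots\oplus H_d$ is the additive RKHS of Gaussian kernels $K_j(x,x')=\exp(-|x-x'|^2/(2\varsigma_j))$, with kernel $K=\sum_jK_j$. Gram matrix: $G_{ij}=K(\widetilde{\mathbf{x}}_i,\widetilde{\mathbf{x}}_j)/N$, with eigenvalues $\widehat\mu_1\ge\dots\ge\widehat\mu_N$; it is assumed invertible. Orlicz norm: $s(\varepsilon)=\inf\{r>0:\mathbb{E}[\exp(\varepsilon^2/r^2)]\le2\}$. Base learner: kernel ridge regression with fixed $\lambda>0$, fitting $\frac1{\sqrt N}\sum_\ell\beta_\ell K(\cdot,\widetilde{\mathbf{x}}_\ell)$ with $\beta=\frac1{\sqrt N}(G+\lambda I)^{-1}u$. $L^2$-boosting: $\widehat f^{(0)}=0$, and each step adds the base learner fit to the residuals. Fitted values after $m$ steps are $(I-(I-S)^m)y^N$ with $S=G(G+\lambda I)^{-1}$. *)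

theory Defs
  imports "HOL-Probability.Probability" "HOL-Library.Landau_Symbols"
    "Jordan_Normal_Form.Char_Poly" "Jordan_Normal_Form.Gauss_Jordan_Elimination"
begin

definition add_kernel :: "('d::finite \<Rightarrow> real) \<Rightarrow> real^'d \<Rightarrow> real^'d \<Rightarrow> real" where
  "add_kernel vs x x' = (\<Sum>j\<in>UNIV. exp (- ((vec_nth x j - vec_nth x' j)^2) / (2 * vs j)))"

definition gram :: "('d::finite \<Rightarrow> real) \<Rightarrow> nat \<Rightarrow> (nat \<Rightarrow> real^'d) \<Rightarrow> real mat" where
  "gram vs N xs = mat N N (\<lambda>(i,j). add_kernel vs (xs i) (xs j) / real N)"

text \<open>Eigenvalues of the (symmetric) Gram matrix, with multiplicity, in decreasing order:
  mu_hat_1 >= ... >= mu_hat_N; mu_hat k (1-based) is element k-1 of this list.\<close>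
definition gram_eigs :: "real mat \<Rightarrow> real list" where
  "gram_eigs G = rev (sorted_list_of_multiset (proots (char_poly G)))"

definition mu_hat :: "real mat \<Rightarrow> nat \<Rightarrow> real" where
  "mu_hat G k = gram_eigs G ! (k - 1)"

text \<open>Base learner: kernel ridge regression fitted to u. It returns the coefficient vector c of
  the fitted function sum_l c_l K(., x_l), i.e. c = beta / sqrt N with
  beta = (1/sqrt N) (G + lambda I)^{-1} u.\<close>
definition krr_coef :: "('d::finite \<Rightarrow> real) \<Rightarrow> real \<Rightarrow> nat \<Rightarrow> (nat \<Rightarrow> real^'d) \<Rightarrow> real vec \<Rightarrow> real vec" where
  "krr_coef vs lam N xs u =
     (1 / sqrt (real N)) \<cdot>\<^sub>v
       ((1 / sqrt (real N)) \<cdot>\<^sub>v (the (mat_inverse (gram vs N xs + lam \<cdot>\<^sub>m 1\<^sub>m N)) *\<^sub>v u))"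

definition fitted_vals :: "('d::finite \<Rightarrow> real) \<Rightarrow> nat \<Rightarrow> (nat \<Rightarrow> real^'d) \<Rightarrow> real vec \<Rightarrow> real vec" where
  "fitted_vals vs N xs c = vec N (\<lambda>i. \<Sum>l<N. vec_index c l * add_kernel vs (xs i) (xs l))"

text \<open>One L2-boosting step on a state (coefficients of the current estimate, current residuals):
  fit the base learner to the residuals, add it to the estimate, update residuals.\<close>
definition boost_step :: "('d::finite \<Rightarrow> real) \<Rightarrow> real \<Rightarrow> nat \<Rightarrow> (nat \<Rightarrow> real^'d) \<Rightarrow>
    real vec \<times> real vec \<Rightarrow> real vec \<times> real vec" where
  "boost_step vs lam N xs s =
     (let b = krr_coef vs lam N xs (snd s)
      in (fst s + b, snd s - fitted_vals vs N xs b))"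

definition boost_coef :: "('d::finite \<Rightarrow> real) \<Rightarrow> real \<Rightarrow> nat \<Rightarrow> (nat \<Rightarrow> real^'d) \<Rightarrow>
    real vec \<Rightarrow> nat \<Rightarrow> real vec" where
  "boost_coef vs lam N xs y m = fst ((boost_step vs lam N xs ^^ m) (0\<^sub>v N, y))"

definition H_norm :: "('d::finite \<Rightarrow> real) \<Rightarrow> nat \<Rightarrow> (nat \<Rightarrow> real^'d) \<Rightarrow> real vec \<Rightarrow> real" where
  "H_norm vs N xs c =
     sqrt (\<Sum>l<N. \<Sum>l'<N. vec_index c l * vec_index c l' * add_kernel vs (xs l) (xs l'))"

definition orlicz_set :: "'a measure \<Rightarrow> ('a \<Rightarrow> real) \<Rightarrow> real set" where
  "orlicz_set M e = {r. r > 0 \<and> (\<integral>\<^sup>+ w. ennreal (exp ((e w)^2 / r^2)) \<partial>M) \<le> 2}"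

definition orlicz_norm :: "'a measure \<Rightarrow> ('a \<Rightarrow> real) \<Rightarrow> real" where
  "orlicz_norm M e = Inf (orlicz_set M e)"

text \<open>Joint law of (X, Y) from the law PX of X and the conditional law Q x of Y given X = x.\<close>
definition joint_law :: "(real^'d) measure \<Rightarrow> (real^'d \<Rightarrow> real measure) \<Rightarrow> ((real^'d) \<times> real) measure" where
  "joint_law PX Q = PX \<bind> (\<lambda>x. distr (Q x) borel (\<lambda>y. (x, y)))"

definition sample_law :: "(real^'d) measure \<Rightarrow> (real^'d \<Rightarrow> real measure) \<Rightarrow> nat \<Rightarrow> (nat \<Rightarrow> (real^'d) \<times> real) measure" where
  "sample_law PX Q N = PiM {..<N} (\<lambda>_. joint_law PX Q)"

definition sample_x :: "nat \<Rightarrow> (nat \<Rightarrow> (real^'d) \<times> real) \<Rightarrow> nat \<Rightarrow> real^'d" where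
  "sample_x N w = restrict (\<lambda>i. fst (w i)) {..<N}"

definition sample_y :: "nat \<Rightarrow> (nat \<Rightarrow> (real^'d) \<times> real) \<Rightarrow> real vec" where
  "sample_y N w = vec N (\<lambda>i. snd (w i))"

end

theory Submission
  imports Defs
begin

(* Let S = G (G + lam I)^-1 and T = I - S = lam (G + lam I)^-1.  Since G is symmetric positive
   semidefinite, 0 <= T <= I.  After k steps the residuals are T^k y, the coefficient vector c_k of
   the estimate satisfies G c_k = (y - T^k y)/N and c_k = (1/(lam N)) sum_{j<k} T^(j+1) y, hence
      ||f^(m)||_H^2 = N c_m' G c_m = (1/(lam N)) sum_{j<m} <T^(j+1) y, y - T^m y>
                    <= m ||y||^2 / (lam N).
   The sub-Gaussian assumption bounds E Y^2 by a constant C, so E ||y||^2 <= C N and Markov's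
   inequality gives P(||f^(m)||_H > h) <= C m / (lam h^2).  Because C_u < C_d, the number of
   steps is m <= N^a with a < 1/2, and h = N^((1/2 + a)/4) makes the bound O(N^(a/2 - 1/4)). *)

unbundle no inner_syntax

lemma smult_one_mat_mult_vec:
  fixes v :: "'a::comm_ring_1 vec"
  assumes "v \<in> carrier_vec n"
  shows "(a \<cdot>\<^sub>m 1\<^sub>m n) *\<^sub>v v = a \<cdot>\<^sub>v v"
  using assms
  by (intro eq_vecI) (auto simp: scalar_prod_def if_distrib if_distribR sum.delta cong: if_cong)

locale ridge_resolvent =
  fixes n :: nat and G P :: "real mat" and lam :: real
  assumes G_carrier: "G \<in> carrier_mat n n" and P_carrier: "P \<in> carrier_mat n n"
    and G_sym: "transpose_mat G = G"
    and G_psd: "\<And>v. v \<in> carrier_vec n \<Longrightarrow> 0 \<le> v \<bullet> (G *\<^sub>v v)"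
    and lam_pos: "lam > 0"
    and resolvent: "(G + lam \<cdot>\<^sub>m 1\<^sub>m n) * P = 1\<^sub>m n"
begin

text \<open>With \<open>P = (G + lam I)\<inverse>\<close>, \<open>T\<close> is the matrix \<open>I - S\<close> of the informal statement;
  it maps the residuals of one boosting step to the next.\<close>

definition T :: "real vec \<Rightarrow> real vec" where
  "T v = lam \<cdot>\<^sub>v (P *\<^sub>v v)"

lemma P_mult_vec_carrier [simp]: "P *\<^sub>v v \<in> carrier_vec n"
  using P_carrier by (intro carrier_vecI) auto

lemma G_mult_vec_carrier [simp]: "G *\<^sub>v v \<in> carrier_vec n"
  using G_carrier by (intro carrier_vecI) auto

lemma T_carrier [simp]: "T v \<in> carrier_vec n"
  unfolding T_def by simp

lemma T_pow_carrier [simp]: "v \<in> carrier_vec n \<Longrightarrow> (T ^^ k) v \<in> carrier_vec n"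
  by (induction k) auto

lemma resolvent_mult_vec:
  assumes v: "v \<in> carrier_vec n"
  shows "G *\<^sub>v (P *\<^sub>v v) + lam \<cdot>\<^sub>v (P *\<^sub>v v) = v"
proof -
  have "v = ((G + lam \<cdot>\<^sub>m 1\<^sub>m n) * P) *\<^sub>v v"
    using v by (simp add: resolvent)
  also have "\<dots> = (G + lam \<cdot>\<^sub>m 1\<^sub>m n) *\<^sub>v (P *\<^sub>v v)"
    using G_carrier P_carrier v by (intro assoc_mult_mat_vec) auto
  also have "\<dots> = G *\<^sub>v (P *\<^sub>v v) + (lam \<cdot>\<^sub>m 1\<^sub>m n) *\<^sub>v (P *\<^sub>v v)"
    using G_carrier v by (intro add_mult_distrib_mat_vec) auto
  also have "(lam \<cdot>\<^sub>m 1\<^sub>m n) *\<^sub>v (P *\<^sub>v v) = lam \<cdot>\<^sub>v (P *\<^sub>v v)"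
    by (simp add: smult_one_mat_mult_vec)
  finally show ?thesis ..
qed

lemma G_P_mult_vec:
  assumes v: "v \<in> carrier_vec n"
  shows "G *\<^sub>v (P *\<^sub>v v) = v - T v"
proof -
  have "v - T v = (G *\<^sub>v (P *\<^sub>v v) + T v) - T v"
    using resolvent_mult_vec[OF v] by (simp add: T_def)
  also have "\<dots> = G *\<^sub>v (P *\<^sub>v v)"
    using v G_carrier by (intro eq_vecI) (auto simp: carrier_vecD[OF T_carrier])
  finally show ?thesis ..
qed

lemma G_scalar_prod_sym:
  "u \<in> carrier_vec n \<Longrightarrow> v \<in> carrier_vec n \<Longrightarrow> (G *\<^sub>v u) \<bullet> v = u \<bullet> (G *\<^sub>v v)"
  using transpose_vec_mult_scalar[OF G_carrier, of v u] G_sym by simp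

lemma T_scalar_prod_sym:
  assumes u: "u \<in> carrier_vec n" and v: "v \<in> carrier_vec n"
  shows "u \<bullet> T v = T u \<bullet> v"
proof -
  define a b where "a = P *\<^sub>v u" and "b = P *\<^sub>v v"
  have a: "a \<in> carrier_vec n" and b: "b \<in> carrier_vec n"
    by (simp_all add: a_def b_def)
  have ua: "u = G *\<^sub>v a + lam \<cdot>\<^sub>v a" and vb: "v = G *\<^sub>v b + lam \<cdot>\<^sub>v b"
    using resolvent_mult_vec[OF u] resolvent_mult_vec[OF v] by (simp_all add: a_def b_def)
  have "u \<bullet> b = (G *\<^sub>v a) \<bullet> b + lam * (a \<bullet> b)"
    unfolding ua using a b by (simp add: add_scalar_prod_distrib[of _ n])
  also have "\<dots> = a \<bullet> (G *\<^sub>v b) + lam * (a \<bullet> b)"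
    using G_scalar_prod_sym a b by simp
  also have "\<dots> = a \<bullet> v"
    unfolding vb using a b by (simp add: scalar_prod_add_distrib[of _ n])
  finally show ?thesis
    unfolding T_def a_def[symmetric] b_def[symmetric] using u v a b by simp
qed

text \<open>Writing \<open>v = (G + lam I) w\<close>, all three quantities are quadratic forms in \<open>w\<close>
  whose coefficients make the inequalities evident.\<close>

lemma T_quadratic_bounds:
  assumes v: "v \<in> carrier_vec n"
  shows "0 \<le> v \<bullet> T v" and "v \<bullet> T v \<le> v \<bullet> v" and "T v \<bullet> T v \<le> v \<bullet> v"
proof -
  define w where "w = P *\<^sub>v v"
  have w: "w \<in> carrier_vec n" by (simp add: w_def)
  have vw: "v = G *\<^sub>v w + lam \<cdot>\<^sub>v w" using resolvent_mult_vec[OF v] by (simp add: w_def)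
  have g: "0 \<le> w \<bullet> (G *\<^sub>v w)" using G_psd[OF w] .
  have ww: "0 \<le> w \<bullet> w" and gg: "0 \<le> (G *\<^sub>v w) \<bullet> (G *\<^sub>v w)"
    using conjugate_square_ge_0_vec[of w] conjugate_square_ge_0_vec[of "G *\<^sub>v w"] by simp_all
  have gw: "(G *\<^sub>v w) \<bullet> w = w \<bullet> (G *\<^sub>v w)" using w by (simp add: comm_scalar_prod[of _ n])
  have vTv: "v \<bullet> T v = lam * (w \<bullet> (G *\<^sub>v w)) + lam * lam * (w \<bullet> w)"
    unfolding T_def w_def[symmetric] using w gw
    by (subst (1) vw) (simp add: add_scalar_prod_distrib[of _ n] algebra_simps)
  have vv: "v \<bullet> v = (G *\<^sub>v w) \<bullet> (G *\<^sub>v w) + 2 * lam * (w \<bullet> (G *\<^sub>v w)) + lam * lam * (w \<bullet> w)"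
    using w gw by (subst (1 2) vw)
      (simp add: add_scalar_prod_distrib[of _ n] scalar_prod_add_distrib[of _ n] algebra_simps)
  have TvTv: "T v \<bullet> T v = lam * lam * (w \<bullet> w)"
    unfolding T_def w_def[symmetric] using w by simp
  show "0 \<le> v \<bullet> T v" using vTv g ww lam_pos by simp
  show "v \<bullet> T v \<le> v \<bullet> v" using vTv vv g gg lam_pos by (simp add: mult_nonneg_nonneg)
  show "T v \<bullet> T v \<le> v \<bullet> v" using TvTv vv g gg lam_pos by (simp add: mult_nonneg_nonneg)
qed

lemma T_pow_scalar_prod_sym:
  assumes "u \<in> carrier_vec n" "v \<in> carrier_vec n"
  shows "u \<bullet> (T ^^ (i + j)) v = (T ^^ i) u \<bullet> (T ^^ j) v"
  using assms(1)
proof (induction i arbitrary: u)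
  case 0
  then show ?case by simp
next
  case (Suc i)
  have "u \<bullet> (T ^^ (Suc i + j)) v = T u \<bullet> (T ^^ (i + j)) v"
    using Suc.prems assms(2) by (simp add: T_scalar_prod_sym)
  also have "\<dots> = (T ^^ Suc i) u \<bullet> (T ^^ j) v"
    using Suc by (simp add: funpow_swap1)
  finally show ?case .
qed

lemma T_pow_norm_le:
  assumes v: "v \<in> carrier_vec n"
  shows "(T ^^ k) v \<bullet> (T ^^ k) v \<le> v \<bullet> v"
proof (induction k)
  case 0
  then show ?case by simp
next
  case (Suc k)
  then show ?case
    using T_quadratic_bounds(3)[OF T_pow_carrier[OF v, of k]] by simp
qed

lemma T_pow_quadratic_bounds:
  assumes v: "v \<in> carrier_vec n"
  shows "0 \<le> v \<bullet> (T ^^ k) v \<and> v \<bullet> (T ^^ k) v \<le> v \<bullet> v"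
proof -
  define j where "j = k div 2"
  define w where "w = (T ^^ j) v"
  have w: "w \<in> carrier_vec n" and ww: "w \<bullet> w \<le> v \<bullet> v"
    using T_pow_norm_le[OF v, of j] v by (simp_all add: w_def)
  have "k = j + j \<or> k = j + Suc j"
    unfolding j_def by presburger
  then consider "v \<bullet> (T ^^ k) v = w \<bullet> w" | "v \<bullet> (T ^^ k) v = w \<bullet> T w"
    using T_pow_scalar_prod_sym[OF v v, of j j] T_pow_scalar_prod_sym[OF v v, of j "Suc j"]
    unfolding w_def by auto
  then show ?thesis
  proof cases
    case 1
    then show ?thesis using ww conjugate_square_ge_0_vec[of w] by simp
  next
    case 2
    then show ?thesis using ww T_quadratic_bounds[OF w] by simp
  qed
qed

lemma T_pow_scalar_prod_diff_le:
  assumes y: "y \<in> carrier_vec n"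
  shows "(T ^^ i) y \<bullet> (y - (T ^^ k) y) \<le> y \<bullet> y"
proof -
  have "(T ^^ i) y \<bullet> (y - (T ^^ k) y) = y \<bullet> (T ^^ i) y - y \<bullet> (T ^^ (i + k)) y"
    using y T_pow_scalar_prod_sym[OF y y, of i k]
    by (simp add: scalar_prod_minus_distrib[of _ n] comm_scalar_prod[of _ n])
  then show ?thesis
    using T_pow_quadratic_bounds[OF y, of i] T_pow_quadratic_bounds[OF y, of "i + k"] by simp
qed

definition step :: "real \<Rightarrow> real vec \<times> real vec \<Rightarrow> real vec \<times> real vec" where
  "step s p = (fst p + s \<cdot>\<^sub>v (P *\<^sub>v snd p), snd p - G *\<^sub>v (P *\<^sub>v snd p))"

primrec coef :: "real \<Rightarrow> real vec \<Rightarrow> nat \<Rightarrow> real vec" where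
  "coef s y 0 = 0\<^sub>v n"
| "coef s y (Suc k) = coef s y k + s \<cdot>\<^sub>v (P *\<^sub>v (T ^^ k) y)"

lemma coef_carrier [simp]: "coef s y k \<in> carrier_vec n"
  by (induction k) auto

lemma step_pow:
  assumes y: "y \<in> carrier_vec n"
  shows "(step s ^^ k) (0\<^sub>v n, y) = (coef s y k, (T ^^ k) y)"
proof (induction k)
  case 0
  then show ?case by simp
next
  case (Suc k)
  define r where "r = (T ^^ k) y"
  have r: "r \<in> carrier_vec n" using y by (simp add: r_def)
  have "r - G *\<^sub>v (P *\<^sub>v r) = T r"
    using r by (simp add: G_P_mult_vec) (intro eq_vecI; simp add: carrier_vecD[OF T_carrier])
  then show ?case
    using Suc by (simp add: step_def r_def)
qed

lemma G_mult_coef: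
  assumes y: "y \<in> carrier_vec n"
  shows "G *\<^sub>v coef s y k = s \<cdot>\<^sub>v (y - (T ^^ k) y)"
proof (induction k)
  case 0
  then show ?case using y G_carrier by (intro eq_vecI) auto
next
  case (Suc k)
  define r where "r = (T ^^ k) y"
  have r: "r \<in> carrier_vec n" using y by (simp add: r_def)
  have "G *\<^sub>v coef s y (Suc k) = G *\<^sub>v coef s y k + s \<cdot>\<^sub>v (G *\<^sub>v (P *\<^sub>v r))"
    using G_carrier r by (simp add: r_def mult_add_distrib_mat_vec[of _ n n] mult_mat_vec[of _ n n])
  also have "\<dots> = s \<cdot>\<^sub>v (y - T r)"
    unfolding Suc G_P_mult_vec[OF r] r_def[symmetric] using y r
    by (intro eq_vecI) (auto simp: carrier_vecD[OF T_carrier] algebra_simps)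
  finally show ?case by (simp add: r_def)
qed

lemma coef_scalar_prod:
  assumes u: "u \<in> carrier_vec n"
  shows "coef s y k \<bullet> u = s / lam * (\<Sum>j<k. (T ^^ Suc j) y \<bullet> u)"
proof (induction k)
  case 0
  then show ?case using u by simp
next
  case (Suc k)
  define r where "r = (T ^^ k) y"
  have "coef s y (Suc k) \<bullet> u = coef s y k \<bullet> u + s * ((P *\<^sub>v r) \<bullet> u)"
    using u by (simp add: r_def add_scalar_prod_distrib[of _ n] smult_scalar_prod_distrib[of _ n])
  also have "(P *\<^sub>v r) \<bullet> u = T r \<bullet> u / lam"
    using lam_pos by (simp add: T_def smult_scalar_prod_distrib[OF P_mult_vec_carrier u])
  finally show ?case
    unfolding Suc by (simp add: r_def add_divide_distrib distrib_left)
qed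

lemma coef_energy_le:
  assumes y: "y \<in> carrier_vec n"
  shows "coef s y k \<bullet> (G *\<^sub>v coef s y k) \<le> s * s * real k / lam * (y \<bullet> y)"
proof -
  have yk: "y - (T ^^ k) y \<in> carrier_vec n" using y by simp
  have "coef s y k \<bullet> (G *\<^sub>v coef s y k)
      = s * s / lam * (\<Sum>j<k. (T ^^ Suc j) y \<bullet> (y - (T ^^ k) y))"
    using yk by (simp add: G_mult_coef[OF y] coef_scalar_prod
        scalar_prod_smult_distrib[OF T_carrier yk] sum_distrib_left mult.assoc)
  also have "\<dots> \<le> s * s / lam * (\<Sum>j<k. y \<bullet> y)"
    using lam_pos T_pow_scalar_prod_diff_le[OF y, of "Suc j" k for j]
    by (intro mult_left_mono sum_mono) auto
  finally show ?thesis by simp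
qed

end

lemma gaussian_kernel_psd:
  fixes a v :: "'a \<Rightarrow> real" and s :: real and I :: "'a set"
  assumes s: "s > 0" and I: "finite I"
  shows "0 \<le> (\<Sum>i\<in>I. \<Sum>j\<in>I. v i * v j * exp (- ((a i - a j)^2) / (2 * s)))"
proof -
  define u where "u i = v i * exp (- ((a i)^2) / (2 * s))" for i
  define t where "t i j n = u i * u j * ((a i * a j / s) ^ n / fact n)" for i j and n :: nat
  have kernel_split: "v i * v j * exp (- ((a i - a j)^2) / (2 * s)) = u i * u j * exp (a i * a j / s)"
    for i j
  proof -
    have "- ((a i - a j)^2) / (2 * s) = - ((a i)^2) / (2 * s) + - ((a j)^2) / (2 * s) + a i * a j / s"
      using s by (simp add: field_simps power2_diff)
    then show ?thesis unfolding u_def by (simp add: exp_add[symmetric])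
  qed
  have "(\<lambda>n. t i j n) sums (u i * u j * exp (a i * a j / s))" for i j
  proof -
    have "(\<lambda>n. (a i * a j / s) ^ n / fact n) sums exp (a i * a j / s)"
      using exp_converges[of "a i * a j / s"] by (simp add: divide_inverse_commute scaleR_conv_of_real)
    then show ?thesis unfolding t_def by (rule sums_mult)
  qed
  then have sums: "(\<lambda>n. \<Sum>i\<in>I. \<Sum>j\<in>I. t i j n) sums (\<Sum>i\<in>I. \<Sum>j\<in>I. u i * u j * exp (a i * a j / s))"
    by (intro sums_sum)
  \<comment> \<open>each term of the exponential series of the kernel is a square\<close>
  have "(\<Sum>i\<in>I. \<Sum>j\<in>I. t i j n) = (\<Sum>i\<in>I. u i * a i ^ n)\<^sup>2 / (s ^ n * fact n)" for n
    unfolding t_def power2_eq_square sum_product sum_divide_distrib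
    by (intro sum.cong refl) (simp add: power_mult_distrib power_divide)
  then have "0 \<le> (\<Sum>i\<in>I. \<Sum>j\<in>I. t i j n)" for n
    using s by simp
  then have "0 \<le> (\<Sum>i\<in>I. \<Sum>j\<in>I. u i * u j * exp (a i * a j / s))"
    using sums_le[OF _ sums_zero sums] by simp
  then show ?thesis
    by (simp only: kernel_split)
qed

lemma add_kernel_sym: "add_kernel vs x x' = add_kernel vs x' x"
  unfolding add_kernel_def by (simp add: power2_commute)

lemma gram_carrier: "gram vs N xs \<in> carrier_mat N N"
  unfolding gram_def by simp

lemma gram_sym: "transpose_mat (gram vs N xs) = gram vs N xs"
  unfolding gram_def by (intro eq_matI) (auto simp: add_kernel_sym)

lemma gram_psd:
  assumes vs: "\<And>j. vs j > 0" and v: "v \<in> carrier_vec N"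
  shows "0 \<le> v \<bullet> (gram vs N xs *\<^sub>v v)"
proof -
  define E where "E d i j = exp (- ((xs i $ d - xs j $ d)^2) / (2 * vs d))" for d i j
  have "v \<bullet> (gram vs N xs *\<^sub>v v)
      = (\<Sum>i<N. v $ i * (\<Sum>j<N. add_kernel vs (xs i) (xs j) / real N * v $ j))"
    using v unfolding gram_def by (simp add: scalar_prod_def lessThan_atLeast0)
  also have "\<dots> = (\<Sum>i<N. \<Sum>j<N. \<Sum>d\<in>UNIV. v $ i * v $ j * E d i j / real N)"
    unfolding add_kernel_def E_def
    by (intro sum.cong refl)
      (simp add: sum_distrib_left sum_distrib_right sum_divide_distrib algebra_simps)
  also have "\<dots> = (\<Sum>d\<in>UNIV. (\<Sum>i<N. \<Sum>j<N. v $ i * v $ j * E d i j) / real N)"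
    by (subst sum.swap) (simp add: sum.swap[of _ "{..<N}" UNIV] sum_divide_distrib)
  also have "\<dots> \<ge> 0"
    unfolding E_def by (intro sum_nonneg divide_nonneg_nonneg gaussian_kernel_psd vs) auto
  finally show ?thesis .
qed

lemma mat_inverse_psd_plus_scalar:
  fixes G :: "real mat"
  assumes G: "G \<in> carrier_mat n n" and psd: "\<And>v. v \<in> carrier_vec n \<Longrightarrow> 0 \<le> v \<bullet> (G *\<^sub>v v)"
    and lam: "lam > 0"
  obtains P where "mat_inverse (G + lam \<cdot>\<^sub>m 1\<^sub>m n) = Some P"
    and "(G + lam \<cdot>\<^sub>m 1\<^sub>m n) * P = 1\<^sub>m n" and "P \<in> carrier_mat n n"
proof -
  let ?P = "G + lam \<cdot>\<^sub>m 1\<^sub>m n"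
  have carrier: "?P \<in> carrier_mat n n" using G by simp
  have "det ?P \<noteq> 0"
  proof
    assume "det ?P = 0"
    then obtain v where v: "v \<in> carrier_vec n" "v \<noteq> 0\<^sub>v n" "?P *\<^sub>v v = 0\<^sub>v n"
      using det_0_iff_vec_prod_zero_field[OF carrier] by auto
    have "v \<bullet> (G *\<^sub>v v) + lam * (v \<bullet> v) = v \<bullet> (?P *\<^sub>v v)"
      using G v(1) by (simp add: add_mult_distrib_mat_vec[of _ n n] smult_one_mat_mult_vec
          scalar_prod_add_distrib[of _ n])
    then have "v \<bullet> (G *\<^sub>v v) + lam * (v \<bullet> v) = 0"
      using v by simp
    moreover have "0 \<le> v \<bullet> (G *\<^sub>v v)" and "0 \<le> lam * (v \<bullet> v)"
      using psd v lam conjugate_square_ge_0_vec[of v] by simp_all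
    ultimately have "lam * (v \<bullet> v) = 0" by linarith
    then have "v \<bullet> v = 0" using lam by simp
    with v show False using conjugate_square_eq_0_vec[of v n] by simp
  qed
  then have "?P \<in> Units (ring_mat TYPE(real) n ())"
    using det_non_zero_imp_unit[OF carrier] by auto
  then obtain P where "mat_inverse ?P = Some P"
    using mat_inverse(1)[OF carrier, where b="()"] by (cases "mat_inverse ?P") auto
  with mat_inverse(2)[OF carrier] that show ?thesis by auto
qed

lemma gram_ridge_resolvent:
  assumes vs: "\<And>j. vs j > 0" and lam: "lam > 0"
  obtains P where "mat_inverse (gram vs N xs + lam \<cdot>\<^sub>m 1\<^sub>m N) = Some P"
    and "ridge_resolvent N (gram vs N xs) P lam"
proof (rule mat_inverse_psd_plus_scalar[OF gram_carrier gram_psd[of vs, OF vs] lam])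
  fix P
  assume inv: "mat_inverse (gram vs N xs + lam \<cdot>\<^sub>m 1\<^sub>m N) = Some P"
    and "(gram vs N xs + lam \<cdot>\<^sub>m 1\<^sub>m N) * P = 1\<^sub>m N" and "P \<in> carrier_mat N N"
  then have "ridge_resolvent N (gram vs N xs) P lam"
    using gram_carrier gram_sym gram_psd[of vs, OF vs] lam by unfold_locales
  with inv show ?thesis by (rule that)
qed

lemma fitted_vals_smult:
  assumes "w \<in> carrier_vec N"
  shows "fitted_vals vs N xs ((1 / real N) \<cdot>\<^sub>v w) = gram vs N xs *\<^sub>v w"
  using assms unfolding fitted_vals_def gram_def
  by (intro eq_vecI) (auto simp: scalar_prod_def lessThan_atLeast0 intro!: sum.cong)

lemma krr_coef_eq:
  "krr_coef vs lam N xs u = (1 / real N) \<cdot>\<^sub>v (the (mat_inverse (gram vs N xs + lam \<cdot>\<^sub>m 1\<^sub>m N)) *\<^sub>v u)"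
  unfolding krr_coef_def by (simp add: smult_smult_assoc)

lemma (in ridge_resolvent) boost_coef_eq_coef:
  assumes G: "G = gram vs n xs"
    and P: "mat_inverse (G + lam \<cdot>\<^sub>m 1\<^sub>m n) = Some P"
    and y: "y \<in> carrier_vec n"
  shows "boost_coef vs lam n xs y m = coef (1 / real n) y m"
proof -
  have "boost_step vs lam n xs = step (1 / real n)"
    using P by (intro ext)
      (simp add: boost_step_def step_def krr_coef_eq fitted_vals_smult G[symmetric])
  then show ?thesis
    unfolding boost_coef_def by (simp add: step_pow[OF y])
qed

lemma H_norm_eq:
  assumes "c \<in> carrier_vec N"
  shows "H_norm vs N xs c = sqrt (real N * (c \<bullet> (gram vs N xs *\<^sub>v c)))"
  using assms unfolding H_norm_def gram_def
  by (cases "N = 0")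
    (simp_all add: scalar_prod_def lessThan_atLeast0 sum_distrib_left algebra_simps)

theorem H_norm_boost_coef_le:
  assumes vs: "\<And>j. vs j > 0" and lam: "lam > 0" and N: "N > 0" and y: "y \<in> carrier_vec N"
  shows "H_norm vs N xs (boost_coef vs lam N xs y m) \<le> sqrt (real m / (lam * real N) * (y \<bullet> y))"
proof -
  obtain P where P: "mat_inverse (gram vs N xs + lam \<cdot>\<^sub>m 1\<^sub>m N) = Some P"
    and R: "ridge_resolvent N (gram vs N xs) P lam"
    using gram_ridge_resolvent[OF vs lam] .
  interpret ridge_resolvent N "gram vs N xs" P lam by (fact R)
  let ?c = "coef (1 / real N) y m"
  have "?c \<bullet> (gram vs N xs *\<^sub>v ?c) \<le> 1 / real N * (1 / real N) * real m / lam * (y \<bullet> y)"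
    by (rule coef_energy_le[OF y])
  then have "real N * (?c \<bullet> (gram vs N xs *\<^sub>v ?c))
      \<le> real N * (1 / real N * (1 / real N) * real m / lam * (y \<bullet> y))"
    by (intro mult_left_mono) auto
  also have "\<dots> = real m / (lam * real N) * (y \<bullet> y)"
    using N by (simp add: field_simps)
  finally show ?thesis
    by (simp add: boost_coef_eq_coef[OF refl P y] H_norm_eq)
qed

lemma nn_integral_square_le_orlicz:
  assumes M: "prob_space M" and f: "f \<in> borel_measurable M"
    and r: "r \<in> orlicz_set M (\<lambda>x. f x - c)"
  shows "(\<integral>\<^sup>+x. ennreal ((f x)\<^sup>2) \<partial>M) \<le> ennreal (4 * r\<^sup>2 + 2 * c\<^sup>2)"
proof -
  interpret prob_space M by (fact M)
  have r0: "r > 0" and r_int: "(\<integral>\<^sup>+x. ennreal (exp ((f x - c)\<^sup>2 / r\<^sup>2)) \<partial>M) \<le> 2"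
    using r unfolding orlicz_set_def by auto
  have pointwise: "(f x)\<^sup>2 \<le> 2 * r\<^sup>2 * exp ((f x - c)\<^sup>2 / r\<^sup>2) + 2 * c\<^sup>2" for x
  proof -
    have "(f x - c)\<^sup>2 / r\<^sup>2 \<le> exp ((f x - c)\<^sup>2 / r\<^sup>2)"
      using exp_ge_add_one_self[of "(f x - c)\<^sup>2 / r\<^sup>2"] by linarith
    then have "(f x - c)\<^sup>2 \<le> r\<^sup>2 * exp ((f x - c)\<^sup>2 / r\<^sup>2)"
      using r0 by (simp add: field_simps)
    moreover have "(f x)\<^sup>2 \<le> 2 * (f x - c)\<^sup>2 + 2 * c\<^sup>2"
      using zero_le_power2[of "f x - 2 * c"] by (simp add: power2_eq_square algebra_simps)
    ultimately show ?thesis by linarith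
  qed
  have "(\<integral>\<^sup>+x. ennreal ((f x)\<^sup>2) \<partial>M)
      \<le> (\<integral>\<^sup>+x. ennreal (2 * r\<^sup>2) * ennreal (exp ((f x - c)\<^sup>2 / r\<^sup>2)) + ennreal (2 * c\<^sup>2) \<partial>M)"
    using pointwise
    by (intro nn_integral_mono)
      (simp add: ennreal_plus[symmetric] ennreal_mult[symmetric] del: ennreal_plus)
  also have "\<dots> = ennreal (2 * r\<^sup>2) * (\<integral>\<^sup>+x. ennreal (exp ((f x - c)\<^sup>2 / r\<^sup>2)) \<partial>M) + ennreal (2 * c\<^sup>2)"
    using f by (subst nn_integral_add) (auto simp: nn_integral_cmult emeasure_space_1)
  also have "\<dots> \<le> ennreal (2 * r\<^sup>2) * 2 + ennreal (2 * c\<^sup>2)"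
    by (intro add_mono mult_left_mono r_int) auto
  also have "ennreal (2 * r\<^sup>2) * 2 = ennreal (4 * r\<^sup>2)"
    using ennreal_mult[of "2 * r\<^sup>2" 2] by simp
  also have "ennreal (4 * r\<^sup>2) + ennreal (2 * c\<^sup>2) = ennreal (4 * r\<^sup>2 + 2 * c\<^sup>2)"
    by (simp add: ennreal_plus)
  finally show ?thesis .
qed

lemma nn_integral_square_le_orlicz_norm:
  assumes "prob_space M" and "f \<in> borel_measurable M"
    and "orlicz_set M (\<lambda>x. f x - c) \<noteq> {}" and "orlicz_norm M (\<lambda>x. f x - c) < t"
  shows "(\<integral>\<^sup>+x. ennreal ((f x)\<^sup>2) \<partial>M) \<le> ennreal (4 * t\<^sup>2 + 2 * c\<^sup>2)"
proof -
  obtain r where r: "r \<in> orlicz_set M (\<lambda>x. f x - c)" and "r < t"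
    using assms(3,4) cInf_lessD unfolding orlicz_norm_def by blast
  moreover have "r > 0"
    using r unfolding orlicz_set_def by simp
  ultimately have "4 * r\<^sup>2 + 2 * c\<^sup>2 \<le> 4 * t\<^sup>2 + 2 * c\<^sup>2"
    by (simp add: power_mono)
  then have "ennreal (4 * r\<^sup>2 + 2 * c\<^sup>2) \<le> ennreal (4 * t\<^sup>2 + 2 * c\<^sup>2)"
    by (rule ennreal_leI)
  with nn_integral_square_le_orlicz[OF assms(1,2) r] show ?thesis
    by (rule order.trans)
qed

lemma measurable_Pair_borel:
  "(\<lambda>y. (x, y)) \<in> borel \<rightarrow>\<^sub>M (borel :: ('a::second_countable_topology \<times> 'b::second_countable_topology) measure)"
proof -
  have "(\<lambda>y. (x, y)) \<in> (borel :: 'b measure) \<rightarrow>\<^sub>M (borel :: 'a measure) \<Otimes>\<^sub>M (borel :: 'b measure)"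
    by measurable
  then show ?thesis by (simp add: borel_prod)
qed

lemma measurable_pair_kernel:
  fixes Q :: "'a::second_countable_topology \<Rightarrow> 'b::second_countable_topology measure"
  assumes Q: "Q \<in> borel \<rightarrow>\<^sub>M prob_algebra borel"
  shows "(\<lambda>x. distr (Q x) borel (\<lambda>y. (x, y))) \<in> borel \<rightarrow>\<^sub>M prob_algebra borel"
proof (rule measurable_prob_algebraI)
  have "(\<lambda>p. p) \<in> (borel \<Otimes>\<^sub>M borel) \<rightarrow>\<^sub>M (borel :: ('a \<times> 'b) measure)"
    by (simp add: borel_prod)
  then have "(\<lambda>(x, y). (x, y)) \<in> (borel \<Otimes>\<^sub>M borel) \<rightarrow>\<^sub>M (borel :: ('a \<times> 'b) measure)"
    by (simp add: case_prod_beta)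
  then show "(\<lambda>x. distr (Q x) borel (\<lambda>y. (x, y))) \<in> borel \<rightarrow>\<^sub>M subprob_algebra borel"
    using measurable_prob_algebraD[OF Q] by (rule measurable_distr2)
  fix x :: 'a
  have "prob_space (Q x)" and "sets (Q x) = sets borel"
    using measurable_space[OF Q, of x] by (simp_all add: space_prob_algebra)
  then show "prob_space (distr (Q x) borel (\<lambda>y. (x, y)))"
    using measurable_Pair_borel[of x]
    by (intro prob_space.prob_space_distr) (simp_all cong: measurable_cong_sets)
qed

lemma
  assumes PX: "prob_space PX" "sets PX = sets borel"
    and Q: "Q \<in> borel \<rightarrow>\<^sub>M prob_algebra borel"
  shows prob_space_joint_law: "prob_space (joint_law PX Q)"
    and sets_joint_law: "sets (joint_law PX Q) = sets borel"
proof -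
  have "PX \<in> space (prob_algebra borel)"
    using PX by (simp add: space_prob_algebra)
  then show "prob_space (joint_law PX Q)" "sets (joint_law PX Q) = sets borel"
    unfolding joint_law_def
    using prob_space_bind' sets_bind' measurable_pair_kernel[OF Q] by blast+
qed

lemma nn_integral_joint_law_snd:
  fixes PX :: "(real^'d::finite) measure"
  assumes PX: "sets PX = sets borel"
    and Q: "Q \<in> borel \<rightarrow>\<^sub>M prob_algebra borel"
    and g: "g \<in> borel_measurable borel"
  shows "(\<integral>\<^sup>+p. g (snd p) \<partial>joint_law PX Q) = (\<integral>\<^sup>+x. \<integral>\<^sup>+y. g y \<partial>Q x \<partial>PX)"
proof -
  have K: "(\<lambda>x. distr (Q x) borel (\<lambda>y. (x, y))) \<in> PX \<rightarrow>\<^sub>M subprob_algebra borel"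
    using measurable_prob_algebraD[OF measurable_pair_kernel[OF Q]] PX
    by (simp cong: measurable_cong_sets)
  have "(\<lambda>p :: (real^'d) \<times> real. g (snd p)) \<in> borel_measurable (borel \<Otimes>\<^sub>M borel)"
    using g by measurable
  then have g_snd: "(\<lambda>p :: (real^'d) \<times> real. g (snd p)) \<in> borel_measurable borel"
    by (simp add: borel_prod)
  have "(\<integral>\<^sup>+p. g (snd p) \<partial>joint_law PX Q)
      = (\<integral>\<^sup>+x. \<integral>\<^sup>+p. g (snd p) \<partial>distr (Q x) borel (\<lambda>y. (x, y)) \<partial>PX)"
    unfolding joint_law_def by (rule nn_integral_bind[OF g_snd K])
  also have "\<dots> = (\<integral>\<^sup>+x. \<integral>\<^sup>+y. g y \<partial>Q x \<partial>PX)"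
  proof (intro nn_integral_cong)
    fix x
    have "sets (Q x) = sets borel"
      using measurable_space[OF Q, of x] by (simp add: space_prob_algebra)
    then have "(\<lambda>y. (x, y)) \<in> Q x \<rightarrow>\<^sub>M borel"
      using measurable_Pair_borel[of x] by (simp cong: measurable_cong_sets)
    then show "(\<integral>\<^sup>+p. g (snd p) \<partial>distr (Q x) borel (\<lambda>y. (x, y))) = (\<integral>\<^sup>+y. g y \<partial>Q x)"
      using g_snd by (simp add: nn_integral_distr)
  qed
  finally show ?thesis .
qed

lemma nn_integral_sum_PiM_iid:
  assumes J: "prob_space J" and f: "f \<in> borel_measurable J" and I: "finite I"
  shows "(\<integral>\<^sup>+w. (\<Sum>i\<in>I. f (w i)) \<partial>PiM I (\<lambda>_. J)) = of_nat (card I) * (\<integral>\<^sup>+x. f x \<partial>J)"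
proof -
  have comp: "(\<lambda>w. w i) \<in> PiM I (\<lambda>_. J) \<rightarrow>\<^sub>M J" if "i \<in> I" for i
    using that by (rule measurable_component_singleton)
  have "(\<integral>\<^sup>+w. (\<Sum>i\<in>I. f (w i)) \<partial>PiM I (\<lambda>_. J)) = (\<Sum>i\<in>I. \<integral>\<^sup>+w. f (w i) \<partial>PiM I (\<lambda>_. J))"
    using comp f by (intro nn_integral_sum) auto
  also have "\<dots> = (\<Sum>i\<in>I. \<integral>\<^sup>+x. f x \<partial>J)"
  proof (intro sum.cong refl)
    fix i assume i: "i \<in> I"
    have "distr (PiM I (\<lambda>_. J)) J (\<lambda>w. w i) = J"
      using distr_PiM_component[of I "\<lambda>_. J" i] J I i by simp
    then show "(\<integral>\<^sup>+w. f (w i) \<partial>PiM I (\<lambda>_. J)) = (\<integral>\<^sup>+x. f x \<partial>J)"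
      using f comp[OF i] by (metis nn_integral_distr)
  qed
  finally show ?thesis by simp
qed

lemma nn_integral_snd_square_joint_law_le:
  fixes PX :: "(real^'d::finite) measure"
  assumes PX: "prob_space PX" "sets PX = sets borel"
    and Q: "Q \<in> borel \<rightarrow>\<^sub>M prob_algebra borel"
    and mean: "\<And>x. \<bar>\<integral>y. y \<partial>Q x\<bar> \<le> mu_max"
    and orlicz: "\<And>x. orlicz_set (Q x) (\<lambda>y. y - (\<integral>y. y \<partial>Q x)) \<noteq> {}
        \<and> orlicz_norm (Q x) (\<lambda>y. y - (\<integral>y. y \<partial>Q x)) \<le> s_max"
  shows "(\<integral>\<^sup>+p. ennreal ((snd p)\<^sup>2) \<partial>joint_law PX Q) \<le> ennreal (4 * (s_max + 1)\<^sup>2 + 2 * mu_max\<^sup>2)"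
proof -
  let ?C = "4 * (s_max + 1)\<^sup>2 + 2 * mu_max\<^sup>2"
  have "(\<integral>\<^sup>+y. ennreal (y\<^sup>2) \<partial>Q x) \<le> ennreal ?C" for x
  proof -
    have Qx: "prob_space (Q x)" "sets (Q x) = sets borel"
      using measurable_space[OF Q, of x] by (simp_all add: space_prob_algebra)
    have "(\<integral>\<^sup>+y. ennreal (y\<^sup>2) \<partial>Q x) \<le> ennreal (4 * (s_max + 1)\<^sup>2 + 2 * (\<integral>y. y \<partial>Q x)\<^sup>2)"
      using orlicz[of x] Qx
      by (intro nn_integral_square_le_orlicz_norm) (auto simp: measurable_cong_sets[OF Qx(2) refl])
    also have "\<dots> \<le> ennreal ?C"
      using power_mono[OF mean[of x] abs_ge_zero, of 2] by (intro ennreal_leI) simp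
    finally show ?thesis .
  qed
  then have "(\<integral>\<^sup>+x. \<integral>\<^sup>+y. ennreal (y\<^sup>2) \<partial>Q x \<partial>PX) \<le> ennreal ?C"
    using nn_integral_mono[of PX _ "\<lambda>_. ennreal ?C"] prob_space.emeasure_space_1[OF PX(1)]
    by simp
  then show ?thesis
    using nn_integral_joint_law_snd[OF PX(2) Q, of "\<lambda>y. ennreal (y\<^sup>2)"] by simp
qed

text \<open>The set \<open>A\<close> need not be measurable: \<open>measure\<close> is \<open>0\<close> on non-measurable sets.\<close>

lemma measure_sum_snd_square_Markov:
  fixes J :: "((real^'d::finite) \<times> real) measure"
  assumes J: "prob_space J" "sets J = sets borel"
    and C: "(\<integral>\<^sup>+p. ennreal ((snd p)\<^sup>2) \<partial>J) \<le> ennreal C" and b: "b \<ge> 0" and C0: "C \<ge> 0"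
    and A: "A \<subseteq> {w \<in> space (PiM {..<N} (\<lambda>_. J)). 1 \<le> b * (\<Sum>i<N. (snd (w i))\<^sup>2)}"
  shows "measure (PiM {..<N} (\<lambda>_. J)) A \<le> b * (real N * C)"
proof -
  define M where "M = PiM {..<N} (\<lambda>_. J)"
  interpret M: prob_space M
    unfolding M_def using J(1) by (intro prob_space_PiM) auto
  define Y where "Y w = (\<Sum>i<N. (snd (w i))\<^sup>2)" for w :: "nat \<Rightarrow> (real^'d) \<times> real"
  define S where "S = {w \<in> space M. 1 \<le> b * Y w}"
  have "(\<lambda>p :: (real^'d) \<times> real. (snd p)\<^sup>2) \<in> borel_measurable (borel \<Otimes>\<^sub>M borel)"
    by measurable
  then have "(\<lambda>p :: (real^'d) \<times> real. (snd p)\<^sup>2) \<in> borel_measurable borel"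
    by (simp add: borel_prod)
  then have snd_sq: "(\<lambda>p :: (real^'d) \<times> real. (snd p)\<^sup>2) \<in> borel_measurable J"
    using J(2) by (simp cong: measurable_cong_sets)
  have "(\<lambda>w. (snd (w i))\<^sup>2) \<in> borel_measurable M" if "i \<in> {..<N}" for i
    using measurable_compose[OF measurable_component_singleton[OF that] snd_sq] by (simp add: M_def)
  then have Y_meas [measurable]: "Y \<in> borel_measurable M"
    unfolding Y_def by (rule borel_measurable_sum)
  have "S = {w \<in> space M. 1 \<le> ennreal b * ennreal (Y w)}"
    using b by (simp add: S_def Y_def sum_nonneg ennreal_mult[symmetric])
  then have "emeasure M S \<le> ennreal b * (\<integral>\<^sup>+w. ennreal (Y w) * indicator (space M) w \<partial>M)"
    by (simp only:) (intro nn_integral_Markov_inequality; simp)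
  also have "(\<integral>\<^sup>+w. ennreal (Y w) * indicator (space M) w \<partial>M) = (\<integral>\<^sup>+w. ennreal (Y w) \<partial>M)"
    by (intro nn_integral_cong) simp
  also have "\<dots> = of_nat N * (\<integral>\<^sup>+p. ennreal ((snd p)\<^sup>2) \<partial>J)"
    using nn_integral_sum_PiM_iid[OF J(1), of "\<lambda>p. ennreal ((snd p)\<^sup>2)" "{..<N}"] snd_sq
    by (simp add: M_def Y_def sum_ennreal[symmetric] del: sum_ennreal)
  also have "ennreal b * \<dots> \<le> ennreal (b * (real N * C))"
    using C b C0
    by (simp add: ennreal_mult ennreal_of_nat_eq_real_of_nat mult_left_mono mult.assoc)
  finally have "measure M S \<le> b * (real N * C)"
    using b C0 by (simp add: M.emeasure_eq_measure)
  moreover have "S \<in> sets M"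
    unfolding S_def by measurable
  moreover have "A \<subseteq> S"
    using A by (simp add: S_def Y_def M_def)
  ultimately show ?thesis
    unfolding M_def[symmetric] using b C0
    by (cases "A \<in> sets M")
      (auto simp: measure_notin_sets intro: order.trans[OF M.finite_measure_mono])
qed

lemma prob_H_norm_boost_coef_gt:
  fixes PX :: "(real^'d::finite) measure"
  assumes vs: "\<And>j. vs j > 0" and lam: "lam > 0" and N: "N > 0" and t: "t > 0"
    and J: "prob_space (joint_law PX Q)" "sets (joint_law PX Q) = sets borel"
    and C: "(\<integral>\<^sup>+p. ennreal ((snd p)\<^sup>2) \<partial>joint_law PX Q) \<le> ennreal C" and C0: "C \<ge> 0"
    and A: "A \<subseteq> {w \<in> space (sample_law PX Q N).
              t < H_norm vs N (sample_x N w) (boost_coef vs lam N (sample_x N w) (sample_y N w) m)}"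
  shows "measure (sample_law PX Q N) A \<le> real m * C / (lam * t\<^sup>2)"
proof -
  define b where "b = real m / (lam * real N * t\<^sup>2)"
  have b0: "b \<ge> 0" using lam N by (simp add: b_def)
  have "A \<subseteq> {w \<in> space (PiM {..<N} (\<lambda>_. joint_law PX Q)). 1 \<le> b * (\<Sum>i<N. (snd (w i))\<^sup>2)}"
  proof
    fix w assume w: "w \<in> A"
    define v where "v = real m / (lam * real N) * (sample_y N w \<bullet> sample_y N w)"
    have "t < H_norm vs N (sample_x N w) (boost_coef vs lam N (sample_x N w) (sample_y N w) m)"
      using w A by blast
    also have "\<dots> \<le> sqrt v"
      unfolding v_def by (rule H_norm_boost_coef_le[of vs, OF vs lam N]) (simp add: sample_y_def)
    finally have t_less: "t < sqrt v" .
    with t have "t\<^sup>2 < (sqrt v)\<^sup>2"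
      by (intro power_strict_mono) auto
    moreover have "0 < v"
      using t t_less by (metis order.strict_trans real_sqrt_gt_0_iff)
    ultimately have "t\<^sup>2 < v"
      by simp
    moreover have "sample_y N w \<bullet> sample_y N w = (\<Sum>i<N. (snd (w i))\<^sup>2)"
      unfolding sample_y_def scalar_prod_def by (simp add: lessThan_atLeast0 power2_eq_square)
    ultimately have "1 < b * (\<Sum>i<N. (snd (w i))\<^sup>2)"
      using t lam N by (simp add: b_def v_def field_simps)
    then show "w \<in> {w \<in> space (PiM {..<N} (\<lambda>_. joint_law PX Q)). 1 \<le> b * (\<Sum>i<N. (snd (w i))\<^sup>2)}"
      using w A unfolding sample_law_def by auto
  qed
  then have "measure (sample_law PX Q N) A \<le> b * (real N * C)"
    unfolding sample_law_def by (rule measure_sum_snd_square_Markov[OF J C b0 C0])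
  also have "\<dots> = real m * C / (lam * t\<^sup>2)"
    using N by (simp add: b_def field_simps)
  finally show ?thesis .
qed

lemma tendsto_prob_H_norm_boost_coef_gt:
  fixes PX :: "(real^'d::finite) measure"
  assumes vs: "\<And>j. vs j > 0" and lam: "lam > 0"
    and J: "prob_space (joint_law PX Q)" "sets (joint_law PX Q) = sets borel"
    and C: "(\<integral>\<^sup>+p. ennreal ((snd p)\<^sup>2) \<partial>joint_law PX Q) \<le> ennreal C" and C0: "C \<ge> 0"
    and a: "a < 1/2"
    and A: "\<And>N. A N \<subseteq> {w \<in> space (sample_law PX Q N). real N powr ((1/2 + a) / 4)
              < H_norm vs N (sample_x N w)
                  (boost_coef vs lam N (sample_x N w) (sample_y N w) (nat \<lfloor>real N powr a\<rfloor>))}"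
  shows "(\<lambda>N. measure (sample_law PX Q N) (A N)) \<longlonglongrightarrow> 0"
proof (rule tendsto_sandwich[OF _ _ tendsto_const])
  have bound: "measure (sample_law PX Q N) (A N) \<le> C / lam * real N powr (a/2 - 1/4)"
    if N: "N > 0" for N
  proof -
    have "measure (sample_law PX Q N) (A N)
        \<le> real (nat \<lfloor>real N powr a\<rfloor>) * C / (lam * (real N powr ((1/2 + a) / 4))\<^sup>2)"
      using N by (intro prob_H_norm_boost_coef_gt[OF vs lam N _ J C C0 A]) simp
    also have "\<dots> \<le> real N powr a * C / (lam * (real N powr ((1/2 + a) / 4))\<^sup>2)"
      using C0 lam by (intro divide_right_mono mult_right_mono) (simp_all add: of_nat_floor)
    also have "(real N powr ((1/2 + a) / 4))\<^sup>2 = real N powr ((1/2 + a) / 4 + (1/2 + a) / 4)"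
      by (simp only: power2_eq_square powr_add)
    also have "(1/2 + a) / 4 + (1/2 + a) / 4 = 1/4 + a/2"
      by simp
    also have "real N powr a * C / (lam * real N powr (1/4 + a/2))
        = C / lam * real N powr (a - (1/4 + a/2))"
      using N by (simp only: powr_diff) (simp add: field_simps)
    also have "a - (1/4 + a/2) = a/2 - 1/4"
      by simp
    finally show ?thesis .
  qed
  show "\<forall>\<^sub>F N in sequentially. measure (sample_law PX Q N) (A N) \<le> C / lam * real N powr (a/2 - 1/4)"
    using eventually_gt_at_top[of 0] by eventually_elim (rule bound)
  show "\<forall>\<^sub>F N in sequentially. 0 \<le> measure (sample_law PX Q N) (A N)"
    by simp
  show "(\<lambda>N. C / lam * real N powr (a/2 - 1/4)) \<longlonglongrightarrow> 0"
    using a by (intro tendsto_mult_right_zero tendsto_neg_powr filterlim_real_sequentially) simp_all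
qed

theorem lemma5:
  fixes PX :: "(real^'d::finite) measure"
    and Q :: "real^'d \<Rightarrow> real measure"
    and vs :: "'d \<Rightarrow> real"
    and lam mu_max s_max sigma2_max C_u C_d :: real
    and B :: "nat \<Rightarrow> (nat \<Rightarrow> real^'d) set"
  assumes PX: "prob_space PX" "sets PX = sets borel"
    and Q_kernel: "Q \<in> borel \<rightarrow>\<^sub>M prob_algebra borel"
    and vs_pos: "\<And>j. vs j > 0"
    and lam_pos: "lam > 0"
    and mu_bdd: "\<And>x. integrable (Q x) (\<lambda>y. y) \<and> \<bar>\<integral>y. y \<partial>Q x\<bar> \<le> mu_max"
    and subgauss: "\<And>x. orlicz_set (Q x) (\<lambda>y. y - (\<integral>y. y \<partial>Q x)) \<noteq> {}
        \<and> 0 < orlicz_norm (Q x) (\<lambda>y. y - (\<integral>y. y \<partial>Q x))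
        \<and> orlicz_norm (Q x) (\<lambda>y. y - (\<integral>y. y \<partial>Q x)) \<le> s_max"
    and var_bdd: "\<And>x. (\<integral>y. (y - (\<integral>y. y \<partial>Q x))^2 \<partial>Q x) \<le> sigma2_max"
    and C_pos: "C_d > C_u" "C_u > 0"
    and B_meas: "\<And>N. B N \<in> sets (PiM {..<N} (\<lambda>_. borel))"
    and B_prob: "(\<lambda>N. measure (sample_law PX Q N)
                   {w \<in> space (sample_law PX Q N). sample_x N w \<in> B N}) \<longlonglongrightarrow> 1"
    and B_inv: "\<And>N xs. N \<ge> 1 \<Longrightarrow> xs \<in> B N \<Longrightarrow> invertible_mat (gram vs N xs)"
    and B_eig: "\<And>N xs. xs \<in> B N \<Longrightarrow>
        (let K0 = nat \<lfloor>ln (real N) / (2 * C_d + 1)\<rfloor>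
         in K0 \<ge> 1 \<longrightarrow>
            (\<Sum>k=K0..N. mu_hat (gram vs N xs) k) \<le> (\<Sum>k=K0..N. exp (- C_u * real k))
            \<and> mu_hat (gram vs N xs) K0 \<ge> exp (- C_d * real K0))"
  shows "\<exists>\<delta>>0. \<exists>h :: nat \<Rightarrow> real.
           h \<in> o(\<lambda>N. real N powr (1/4 - \<delta>)) \<and>
           (\<lambda>N. measure (sample_law PX Q N)
              {w \<in> space (sample_law PX Q N).
                 H_norm vs N (sample_x N w)
                   (boost_coef vs lam N (sample_x N w) (sample_y N w)
                      (nat \<lfloor>real N powr ((1/4) * (C_u + C_d + 1/2) / (C_d + 1))\<rfloor>)) > h N
                 \<and> sample_x N w \<in> B N}) \<longlonglongrightarrow> 0"
proof -
  define a where "a = (1/4) * (C_u + C_d + 1/2) / (C_d + 1)"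
  have a: "a < 1/2"
    using C_pos by (simp add: a_def field_simps)
  have J: "prob_space (joint_law PX Q)" "sets (joint_law PX Q) = sets borel"
    using prob_space_joint_law[OF PX Q_kernel] sets_joint_law[OF PX Q_kernel] by simp_all
  have C: "(\<integral>\<^sup>+p. ennreal ((snd p)\<^sup>2) \<partial>joint_law PX Q) \<le> ennreal (4 * (s_max + 1)\<^sup>2 + 2 * mu_max\<^sup>2)"
    using mu_bdd subgauss by (intro nn_integral_snd_square_joint_law_le[OF PX Q_kernel]) auto
  have "(\<lambda>N. real N powr ((1/2 + a) / 4)) \<in> o(\<lambda>N. real N powr (1/4 - (1/2 - a) / 8))"
    using a by (intro powr_smallo_iff[OF filterlim_real_sequentially sequentially_bot, THEN iffD2])
      (simp add: field_simps)
  moreover have "(1/2 - a) / 8 > 0"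
    using a by simp
  moreover have "(\<lambda>N. measure (sample_law PX Q N)
      {w \<in> space (sample_law PX Q N).
         H_norm vs N (sample_x N w) (boost_coef vs lam N (sample_x N w) (sample_y N w)
           (nat \<lfloor>real N powr a\<rfloor>)) > real N powr ((1/2 + a) / 4) \<and> sample_x N w \<in> B N}) \<longlonglongrightarrow> 0"
    by (rule tendsto_prob_H_norm_boost_coef_gt[OF vs_pos lam_pos J C _ a]) auto
  ultimately show ?thesis
    unfolding a_def by blast
qed

end
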